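(* Let $k\ge2$ be an integer and let $D$ be a digraph of order $n$ with no isolated vertex. Then $\gamma_{trk}(D)=k$ if and only if one of the following holds: (a) $n=k$; (b) $n\ge k+1$ and there exists a set $X=\{v_1,\dots,v_t\}\subseteq V(D)$ with $2\le t\le k$ such that the induced subdigraph $D[X]$ has no isolated vertex and $V(D)\setminus X\subseteq N^+(v_i)$ for every $1\le i\le t$.
   Context: All digraphs are finite, with no loops or multiple arcs (pairs of opposite arcs are allowed). $N^-(v)$, $N^+(v)$ denote the in- and out-neighborhoods of $v$; $D[X]$ is the subdigraph induced by $X$. A vertex is isolated if it has no in-neighbor and no out-neighbor. For a positive integer $k$, a $k$-rainbow dominating function ($k$RDF) on $D$ is a function $f:V(D)\to\mathcal P(\{1,\dots,k\})$ such that every $v$ with $f(v)=\emptyset$ satisfies $\bigcup_{u\in N^-(v)}f(u)=\{1,\dots,k\}$; its weight is $\omega(f)=\sum_v|f(v)|$. If $D$ has no isolated vertex, a total $k$RDF (T$k$RDF) is a $k$RDF $f$ such that the subdigraph induced by $\{v:f(v)\ne\emptyset\}$ has no isolated vertex; $\gamma_{trk}(D)$ is the minimum weight of a T$k$RDF. *)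

theory Defs
  imports Main
begin

definition digraph :: "'a set \<Rightarrow> ('a \<times> 'a) set \<Rightarrow> bool" where
  "digraph V A \<longleftrightarrow> finite V \<and> A \<subseteq> V \<times> V \<and> (\<forall>v. (v, v) \<notin> A)"

definition in_nbrs :: "'a set \<Rightarrow> ('a \<times> 'a) set \<Rightarrow> 'a \<Rightarrow> 'a set" where
  "in_nbrs V A v = {u \<in> V. (u, v) \<in> A}"

definition out_nbrs :: "'a set \<Rightarrow> ('a \<times> 'a) set \<Rightarrow> 'a \<Rightarrow> 'a set" where
  "out_nbrs V A v = {u \<in> V. (v, u) \<in> A}"

definition induced_arcs :: "('a \<times> 'a) set \<Rightarrow> 'a set \<Rightarrow> ('a \<times> 'a) set" where
  "induced_arcs A X = A \<inter> (X \<times> X)"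

definition isolated :: "'a set \<Rightarrow> ('a \<times> 'a) set \<Rightarrow> 'a \<Rightarrow> bool" where
  "isolated V A v \<longleftrightarrow> in_nbrs V A v = {} \<and> out_nbrs V A v = {}"

definition no_isolated :: "'a set \<Rightarrow> ('a \<times> 'a) set \<Rightarrow> bool" where
  "no_isolated V A \<longleftrightarrow> (\<forall>v\<in>V. \<not> isolated V A v)"

definition kRDF :: "'a set \<Rightarrow> ('a \<times> 'a) set \<Rightarrow> nat \<Rightarrow> ('a \<Rightarrow> nat set) \<Rightarrow> bool" where
  "kRDF V A k f \<longleftrightarrow>
     (\<forall>v\<in>V. f v \<subseteq> {1..k}) \<and>
     (\<forall>v\<in>V. f v = {} \<longrightarrow> (\<Union>u\<in>in_nbrs V A v. f u) = {1..k})"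

definition TkRDF :: "'a set \<Rightarrow> ('a \<times> 'a) set \<Rightarrow> nat \<Rightarrow> ('a \<Rightarrow> nat set) \<Rightarrow> bool" where
  "TkRDF V A k f \<longleftrightarrow> kRDF V A k f \<and>
     (let P = {v \<in> V. f v \<noteq> {}} in no_isolated P (induced_arcs A P))"

definition weight :: "'a set \<Rightarrow> ('a \<Rightarrow> nat set) \<Rightarrow> nat" where
  "weight V f = (\<Sum>v\<in>V. card (f v))"

definition gamma_trk :: "'a set \<Rightarrow> ('a \<times> 'a) set \<Rightarrow> nat \<Rightarrow> nat" where
  "gamma_trk V A k = Min {weight V f | f. TkRDF V A k f}"

end

theory Submission
  imports Defs
begin

text \<open>A vertex with the empty label needs weight at least $k$ on its in-neighbourhood, and a
  labelled vertex contributes at least 1; so every T$k$RDF has weight at least $\min(n,k)$, while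
  labelling every vertex with $\{1\}$ gives weight $n$. If a T$k$RDF has weight exactly $k$ and
  some unlabelled vertex $y$, the in-neighbours of $y$ already carry the whole weight, so every
  labelled vertex is an in-neighbour of $y$: the labelled vertices form the set $X$ of (b).
  Conversely, partitioning $\{1,\dots,k\}$ into $|X|$ nonempty blocks indexed by $X$ yields a
  T$k$RDF of weight $k$.\<close>

definition rdf_support :: "'a set \<Rightarrow> ('a \<Rightarrow> nat set) \<Rightarrow> 'a set" where
  "rdf_support V f = {v \<in> V. f v \<noteq> {}}"

lemma TkRDF_iff:
  "TkRDF V A k f \<longleftrightarrow> kRDF V A k f \<and>
     no_isolated (rdf_support V f) (induced_arcs A (rdf_support V f))"
  by (simp add: TkRDF_def rdf_support_def Let_def)

lemma weight_eq_sum_support: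
  assumes "finite V"
  shows "weight V f = (\<Sum>v\<in>rdf_support V f. card (f v))"
  unfolding weight_def rdf_support_def
  by (rule sum.mono_neutral_right) (use assms in auto)

lemma kRDF_card_label_le:
  assumes "kRDF V A k f" "v \<in> V"
  shows "card (f v) \<le> k"
  using assms card_mono[of "{1..k}" "f v"] by (simp add: kRDF_def)

lemma kRDF_card_label_pos:
  assumes "kRDF V A k f" "v \<in> V" "f v \<noteq> {}"
  shows "0 < card (f v)"
  using assms finite_subset[of "f v" "{1..k}"] by (auto simp: kRDF_def card_gt_0_iff)

lemma kRDF_card_support_le_weight:
  assumes "finite V" "kRDF V A k f"
  shows "card (rdf_support V f) \<le> weight V f"
proof -
  have "card (f v) \<ge> 1" if "v \<in> rdf_support V f" for v
    using that kRDF_card_label_pos[OF assms(2)] by (auto simp: rdf_support_def Suc_le_eq)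
  then have "(\<Sum>v\<in>rdf_support V f. 1) \<le> (\<Sum>v\<in>rdf_support V f. card (f v))"
    by (rule sum_mono)
  then show ?thesis using weight_eq_sum_support[OF assms(1)] by simp
qed

lemma kRDF_weight_in_nbrs_ge:
  assumes "finite V" "kRDF V A k f" "y \<in> V" "f y = {}"
  shows "k \<le> (\<Sum>u\<in>in_nbrs V A y. card (f u))"
proof -
  have "k = card (\<Union>u\<in>in_nbrs V A y. f u)" using assms(2-4) by (simp add: kRDF_def)
  also have "\<dots> \<le> (\<Sum>u\<in>in_nbrs V A y. card (f u))"
    by (rule card_UN_le) (use assms(1) in \<open>simp add: in_nbrs_def\<close>)
  finally show ?thesis .
qed

lemma kRDF_weight_ge_min:
  assumes "finite V" "kRDF V A k f"
  shows "min (card V) k \<le> weight V f"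
proof (cases "rdf_support V f = V")
  case True
  then show ?thesis using kRDF_card_support_le_weight[OF assms] by simp
next
  case False
  then obtain y where y: "y \<in> V" "f y = {}" by (auto simp: rdf_support_def)
  have "k \<le> (\<Sum>u\<in>in_nbrs V A y. card (f u))" by (rule kRDF_weight_in_nbrs_ge[OF assms y])
  also have "\<dots> \<le> weight V f" unfolding weight_def
    by (rule sum_mono2) (use assms(1) in \<open>auto simp: in_nbrs_def\<close>)
  finally show ?thesis by simp
qed

lemma kRDF_weight_k_support_subset_in_nbrs:
  assumes "finite V" "kRDF V A k f" "weight V f = k" "y \<in> V" "f y = {}"
  shows "rdf_support V f \<subseteq> in_nbrs V A y"
proof
  fix w assume w: "w \<in> rdf_support V f"
  show "w \<in> in_nbrs V A y"
  proof (rule ccontr)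
    assume "w \<notin> in_nbrs V A y"
    have wV: "w \<in> V" and "f w \<noteq> {}" using w by (auto simp: rdf_support_def)
    then have "card (f w) > 0" by (rule kRDF_card_label_pos[OF assms(2)])
    have "card (f w) \<le> k" using kRDF_card_label_le[OF assms(2) wV] .
    have "k \<le> (\<Sum>u\<in>in_nbrs V A y. card (f u))" by (rule kRDF_weight_in_nbrs_ge[OF assms(1,2,4,5)])
    also have "\<dots> \<le> (\<Sum>u\<in>V - {w}. card (f u))"
      by (rule sum_mono2) (use assms(1) \<open>w \<notin> in_nbrs V A y\<close> in \<open>auto simp: in_nbrs_def\<close>)
    also have "\<dots> = k - card (f w)"
      using sum_diff1_nat[of "\<lambda>u. card (f u)" V w] wV assms(3) by (simp add: weight_def)
    finally show False using \<open>card (f w) > 0\<close> \<open>card (f w) \<le> k\<close> by linarith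
  qed
qed

lemma no_isolated_card_ge_2:
  assumes "digraph V A" "X \<subseteq> V" "X \<noteq> {}" "no_isolated X (induced_arcs A X)"
  shows "2 \<le> card X"
proof -
  obtain x where x: "x \<in> X" using assms(3) by auto
  then have "\<not> isolated X (induced_arcs A X) x" using assms(4) by (simp add: no_isolated_def)
  then obtain u where u: "u \<in> X" "(u, x) \<in> A \<or> (x, u) \<in> A"
    by (auto simp: isolated_def in_nbrs_def out_nbrs_def induced_arcs_def)
  have "u \<noteq> x" using u assms(1) by (auto simp: digraph_def)
  moreover have "finite X" using assms(1,2) finite_subset by (auto simp: digraph_def)
  ultimately show ?thesis using card_mono[of X "{x, u}"] x u by simp
qed

lemma TkRDF_const_singleton:
  assumes "k \<ge> 1" "digraph V A" "no_isolated V A"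
  shows "TkRDF V A k (\<lambda>_. {1})"
proof -
  have "rdf_support V (\<lambda>_. {1}) = V" by (simp add: rdf_support_def)
  moreover have "induced_arcs A V = A" using assms(2) by (auto simp: induced_arcs_def digraph_def)
  ultimately show ?thesis using assms by (simp add: TkRDF_iff kRDF_def)
qed

lemma finite_TkRDF_weights:
  assumes "finite V"
  shows "finite {weight V f | f. TkRDF V A k f}"
proof (rule finite_subset)
  show "{weight V f | f. TkRDF V A k f} \<subseteq> {..k * card V}"
  proof clarsimp
    fix f assume "TkRDF V A k f"
    then have "weight V f \<le> (\<Sum>v\<in>V. k)"
      unfolding weight_def TkRDF_def by (meson kRDF_card_label_le sum_mono)
    then show "weight V f \<le> k * card V" by (simp add: mult.commute)
  qed
qed simp

lemma gamma_trk_le_weight: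
  assumes "finite V" "TkRDF V A k f"
  shows "gamma_trk V A k \<le> weight V f"
  unfolding gamma_trk_def using assms finite_TkRDF_weights[OF assms(1)] by (auto intro: Min_le)

lemma gamma_trk_attained:
  assumes "finite V" "TkRDF V A k g"
  obtains f where "TkRDF V A k f" "weight V f = gamma_trk V A k"
proof -
  have "weight V g \<in> {weight V f | f. TkRDF V A k f}" using assms(2) by blast
  then have "gamma_trk V A k \<in> {weight V f | f. TkRDF V A k f}"
    unfolding gamma_trk_def using finite_TkRDF_weights[OF assms(1)] by (intro Min_in) auto
  then obtain f where "TkRDF V A k f" "weight V f = gamma_trk V A k" by auto
  then show ?thesis by (rule that)
qed

lemma exists_label_partition:
  assumes "finite X" "X \<noteq> {}" "card X \<le> k"
  shows "\<exists>g. (\<forall>v\<in>X. g v \<noteq> {} \<and> g v \<subseteq> {1..k}) \<and> (\<Union>v\<in>X. g v) = {1..k} \<and>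
             (\<Sum>v\<in>X. card (g v)) = k"
  using assms
proof (induction X arbitrary: k rule: finite_ne_induct)
  case (singleton x)
  then show ?case by (intro exI[of _ "\<lambda>_. {1..k}"]) auto
next
  case (insert x F)
  have "card F \<le> k - 1" "card F \<ge> 1"
    using insert.hyps insert.prems by (auto simp: Suc_le_eq card_gt_0_iff)
  then obtain g where g: "\<forall>v\<in>F. g v \<noteq> {} \<and> g v \<subseteq> {1..k - 1}"
    "(\<Union>v\<in>F. g v) = {1..k - 1}" "(\<Sum>v\<in>F. card (g v)) = k - 1"
    using insert.IH[of "k - 1"] by blast
  have k: "k \<ge> 2" using \<open>card F \<le> k - 1\<close> \<open>card F \<ge> 1\<close> by linarith
  let ?g = "g(x := {k})"
  have labels: "\<forall>v\<in>insert x F. ?g v \<noteq> {} \<and> ?g v \<subseteq> {1..k}"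
  proof
    fix v assume v: "v \<in> insert x F"
    show "?g v \<noteq> {} \<and> ?g v \<subseteq> {1..k}"
    proof (cases "v = x")
      case False
      then have "g v \<noteq> {}" "g v \<subseteq> {1..k - 1}" using g(1) v by auto
      then show ?thesis using False by force
    qed (use k in simp)
  qed
  have "?g ` F = g ` F" using insert.hyps(3) by (intro image_cong) auto
  then have "(\<Union>v\<in>insert x F. ?g v) = {k} \<union> {1..k - 1}"
    unfolding UN_insert using g(2) by simp
  also have "\<dots> = {1..k}" using k by auto
  finally have union: "(\<Union>v\<in>insert x F. ?g v) = {1..k}" .
  have "(\<Sum>v\<in>F. card (?g v)) = k - 1"
    using g(3) insert.hyps(3) by (metis (no_types, lifting) fun_upd_other sum.cong)
  then have "(\<Sum>v\<in>insert x F. card (?g v)) = k"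
    using insert.hyps(1,3) k by simp
  with labels union show ?case by blast
qed

lemma TkRDF_of_dominating_set:
  assumes "X \<subseteq> V" "finite V" "X \<noteq> {}" "card X \<le> k"
    and "no_isolated X (induced_arcs A X)" "\<forall>v\<in>X. V - X \<subseteq> out_nbrs V A v"
  obtains f where "TkRDF V A k f" "weight V f = k"
proof -
  have "finite X" using assms(1,2) finite_subset by blast
  then obtain g where g: "\<forall>v\<in>X. g v \<noteq> {} \<and> g v \<subseteq> {1..k}" "(\<Union>v\<in>X. g v) = {1..k}"
    "(\<Sum>v\<in>X. card (g v)) = k"
    using exists_label_partition[OF \<open>finite X\<close> assms(3,4)] by blast
  define f where "f v = (if v \<in> X then g v else {})" for v
  have support: "rdf_support V f = X" using assms(1) g(1) by (auto simp: rdf_support_def f_def)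
  have "(\<Union>u\<in>in_nbrs V A y. f u) = {1..k}" if "y \<in> V" "f y = {}" for y
  proof -
    have "y \<notin> X" using that support by (auto simp: rdf_support_def)
    then have "X \<subseteq> in_nbrs V A y"
      using that(1) assms(1,6) by (auto simp: in_nbrs_def out_nbrs_def)
    then have "(\<Union>u\<in>in_nbrs V A y. f u) = (\<Union>u\<in>X. g u)"
      by (auto simp: f_def in_nbrs_def)
    with g(2) show ?thesis by simp
  qed
  then have "TkRDF V A k f" using g(1) assms(5) support by (auto simp: TkRDF_iff kRDF_def f_def)
  moreover have "weight V f = k"
    using weight_eq_sum_support[OF assms(2), of f] support g(3) by (simp add: f_def)
  ultimately show ?thesis using that by blast
qed

lemma TkRDF_weight_k_support:
  assumes "digraph V A" "k \<ge> 1" "TkRDF V A k f" "weight V f = k"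
  defines "X \<equiv> rdf_support V f"
  shows "X \<subseteq> V" "2 \<le> card X" "card X \<le> k" "no_isolated X (induced_arcs A X)"
    "\<forall>v\<in>X. V - X \<subseteq> out_nbrs V A v"
proof -
  have fin: "finite V" using assms(1) by (simp add: digraph_def)
  have kRDF: "kRDF V A k f" and noiso: "no_isolated X (induced_arcs A X)"
    using assms(3) by (auto simp: TkRDF_iff X_def)
  show "X \<subseteq> V" by (simp add: X_def rdf_support_def)
  show "card X \<le> k" using kRDF_card_support_le_weight[OF fin kRDF] assms(4) X_def by simp
  have "X \<noteq> {}" using weight_eq_sum_support[OF fin, of f] assms(2,4) X_def by auto
  with \<open>X \<subseteq> V\<close> show "2 \<le> card X" by (rule no_isolated_card_ge_2[OF assms(1) _ _ noiso])
  show "no_isolated X (induced_arcs A X)" by (fact noiso)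
  show "\<forall>v\<in>X. V - X \<subseteq> out_nbrs V A v"
    using kRDF_weight_k_support_subset_in_nbrs[OF fin kRDF assms(4)]
    by (fastforce simp: X_def rdf_support_def in_nbrs_def out_nbrs_def)
qed

theorem theorem3p5:
  fixes V :: "'a set" and A :: "('a \<times> 'a) set" and k :: nat
  assumes "k \<ge> 2" and "digraph V A" and "no_isolated V A"
  shows "gamma_trk V A k = k \<longleftrightarrow>
    (card V = k \<or>
     (card V \<ge> k + 1 \<and>
      (\<exists>X. X \<subseteq> V \<and> 2 \<le> card X \<and> card X \<le> k \<and>
           no_isolated X (induced_arcs A X) \<and>
           (\<forall>v\<in>X. V - X \<subseteq> out_nbrs V A v))))"
    (is "_ \<longleftrightarrow> card V = k \<or> card V \<ge> k + 1 \<and> (\<exists>X. ?good X)")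
proof -
  have fin: "finite V" using assms(2) by (simp add: digraph_def)
  have const: "TkRDF V A k (\<lambda>_. {1})" by (rule TkRDF_const_singleton) (use assms in auto)
  have upper: "gamma_trk V A k \<le> card V"
    using gamma_trk_le_weight[OF fin const] by (simp add: weight_def)
  obtain f where f: "TkRDF V A k f" "weight V f = gamma_trk V A k"
    using gamma_trk_attained[OF fin const] .
  have lower: "min (card V) k \<le> gamma_trk V A k"
    using kRDF_weight_ge_min[OF fin] f by (metis TkRDF_def)
  have good_of_gamma: "\<exists>X. ?good X" if "gamma_trk V A k = k"
    using TkRDF_weight_k_support[OF assms(2) _ f(1)] f(2) that assms(1) by auto
  have gamma_le_of_good: "gamma_trk V A k \<le> k" if good: "?good X" for X
  proof -
    obtain g where "TkRDF V A k g" "weight V g = k"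
      by (rule TkRDF_of_dominating_set[of X V k A]) (use good fin in auto)
    then show ?thesis using gamma_trk_le_weight[OF fin] by metis
  qed
  show ?thesis
  proof (cases "card V = k")
    case True
    then show ?thesis using upper lower by simp
  next
    case False
    have "gamma_trk V A k = k \<longleftrightarrow> card V \<ge> k + 1 \<and> (\<exists>X. ?good X)"
    proof
      assume "gamma_trk V A k = k"
      then show "card V \<ge> k + 1 \<and> (\<exists>X. ?good X)" using False upper good_of_gamma by auto
    next
      assume "card V \<ge> k + 1 \<and> (\<exists>X. ?good X)"
      then obtain X where "card V \<ge> k + 1" "?good X" by blast
      then show "gamma_trk V A k = k" using gamma_le_of_good[of X] lower by simp
    qed
    with False show ?thesis by simp
  qed
qed

end
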